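(* Let $g$ be an $n$-variable Boolean function, $b\in\mathbb{F}_2$, and $g_b$ the $(n+1)$-variable function $g_b(X_{n+1},X_n,\ldots,X_1)=(1\oplus X_{n+1})g(X_n,\ldots,X_1)\oplus X_{n+1}(b\oplus g(1\oplus X_n,\ldots,1\oplus X_1))$. If $g$ is $t$-resilient but not $(t+1)$-resilient for some integer $0\le t<n$ with $t\equiv b\pmod 2$, then $g_b$ is $(t+1)$-resilient but not $(t+2)$-resilient. If moreover $g$ is plateaued, then $g_b$ is plateaued and every nonzero value $W_{g_b}^2(\bm{\beta})$ equals $\max_{\bm{\alpha}}W_g^2(\bm{\alpha})=2^{-H_\infty(g)}$.
   Context: Walsh transform: $W_f(\bm{\alpha})=2^{-n}\sum_{\mathbf{x}}(-1)^{f(\mathbf{x})\oplus\langle\mathbf{x},\bm{\alpha}\rangle}$. $f$ is $t$-resilient if $W_f(\bm{\alpha})=0$ whenever the Hamming weight $\mathrm{wt}(\bm{\alpha})\le t$; $f$ is plateaued if $W_f$ takes only values in $\{0,c,-c\}$ for some $c$. $H_\infty(f)=\min_{\bm{\alpha}:W_f^2(\bm{\alpha})\ne0}\log_2(1/W_f^2(\bm{\alpha}))$. *)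

theory Defs
  imports Complex_Main
begin

text \<open>Vectors of F_2^n are bool lists of length n (True = 1); a Boolean function
  on n variables is a map bool list => bool, considered on lists of length n.\<close>

definition vecs :: "nat \<Rightarrow> bool list set" where
  "vecs n = {x. length x = n}"

definition wt :: "bool list \<Rightarrow> nat" where
  "wt a = length (filter id a)"

definition ip :: "bool list \<Rightarrow> bool list \<Rightarrow> bool" where
  "ip x a = odd (length (filter id (map2 (\<and>) x a)))"

definition walsh :: "nat \<Rightarrow> (bool list \<Rightarrow> bool) \<Rightarrow> bool list \<Rightarrow> real" where
  "walsh n f a = (1 / 2 ^ n) * (\<Sum>x\<in>vecs n. (-1::real) ^ of_bool (f x \<noteq> ip x a))"

definition resilient :: "nat \<Rightarrow> nat \<Rightarrow> (bool list \<Rightarrow> bool) \<Rightarrow> bool" where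
  "resilient n t f \<longleftrightarrow> (\<forall>a\<in>vecs n. wt a \<le> t \<longrightarrow> walsh n f a = 0)"

definition plateaued :: "nat \<Rightarrow> (bool list \<Rightarrow> bool) \<Rightarrow> bool" where
  "plateaued n f \<longleftrightarrow> (\<exists>c. \<forall>a\<in>vecs n. walsh n f a \<in> {0, c, -c})"

definition H_inf :: "nat \<Rightarrow> (bool list \<Rightarrow> bool) \<Rightarrow> real" where
  "H_inf n f = Min {log 2 (1 / (walsh n f a)\<^sup>2) | a. a \<in> vecs n \<and> (walsh n f a)\<^sup>2 \<noteq> 0}"

text \<open>g_b(X_{n+1}, X_n..X_1) = (1+X_{n+1}) g(X_n..X_1) + X_{n+1}(b + g(1+X_n,..,1+X_1));
  the first list entry is X_{n+1}.\<close>
definition gext :: "(bool list \<Rightarrow> bool) \<Rightarrow> bool \<Rightarrow> bool list \<Rightarrow> bool" where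
  "gext g b x = (if hd x then (b \<noteq> g (map Not (tl x))) else g (tl x))"

end

theory Submission
  imports Defs
begin

text \<open>The Walsh coefficient of \<open>g\<^sub>b\<close> at \<open>(c, \<alpha>)\<close> is the sum of two halves: the half with
  \<open>X\<^sub>n\<^sub>+\<^sub>1 = 0\<close> is \<open>W\<^sub>g(\<alpha>)/2\<close>, and substituting \<open>x \<mapsto> 1 \<oplus> x\<close> in the other half shows that
  it equals \<open>(-1)\<^bsup>b+c+wt(\<alpha>)\<^esup> W\<^sub>g(\<alpha>)/2\<close>. So that coefficient is \<open>W\<^sub>g(\<alpha>)\<close> or \<open>0\<close> according to
  the parity of \<open>b + c + wt(\<alpha>)\<close>. Hence the spectrum of \<open>g\<^sub>b\<close> lies in that of \<open>g\<close> together with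
  \<open>0\<close>, which transfers plateauedness; and since \<open>t \<equiv> b\<close>, the nonzero coefficients of \<open>g\<close> of
  weight \<open>t + 1\<close> survive only with \<open>c = 1\<close>, i.e. at weight \<open>t + 2\<close>.\<close>

lemma ip_Cons: "ip (x # xs) (a # as) = ((x \<and> a) \<noteq> ip xs as)"
  by (cases x; cases a) (simp_all add: ip_def)

lemma wt_Cons: "wt (a # as) = of_bool a + wt as"
  by (simp add: wt_def)

lemma ip_map_Not: "length y = length a \<Longrightarrow> ip (map Not y) a = (ip y a \<noteq> odd (wt a))"
proof (induction y arbitrary: a)
  case Nil
  then show ?case by (simp add: ip_def wt_def)
next
  case (Cons y ys)
  then obtain c cs where a: "a = c # cs" "length ys = length cs" by (cases a) auto
  show ?case using Cons.IH[OF a(2)] by (auto simp: a ip_Cons wt_Cons)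
qed

lemma finite_vecs: "finite (vecs n)"
proof -
  have "vecs n = {xs. set xs \<subseteq> (UNIV :: bool set) \<and> length xs = n}"
    by (auto simp: vecs_def)
  then show ?thesis using finite_lists_length_eq[of "UNIV :: bool set" n] by simp
qed

lemma vecs_Suc: "vecs (Suc n) = Cons False ` vecs n \<union> Cons True ` vecs n"
proof
  show "vecs (Suc n) \<subseteq> Cons False ` vecs n \<union> Cons True ` vecs n"
  proof
    fix x assume "x \<in> vecs (Suc n)"
    then obtain h t where "x = h # t" "t \<in> vecs n" by (cases x) (auto simp: vecs_def)
    then show "x \<in> Cons False ` vecs n \<union> Cons True ` vecs n" by (cases h) auto
  qed
qed (auto simp: vecs_def)

lemma vecs_SucE:
  assumes "\<beta> \<in> vecs (Suc n)"
  obtains c a where "\<beta> = c # a" "a \<in> vecs n"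
  using assms by (cases \<beta>) (auto simp: vecs_def)

lemma sum_vecs_Suc:
  "(\<Sum>x\<in>vecs (Suc n). f x) = (\<Sum>y\<in>vecs n. f (False # y)) + (\<Sum>y\<in>vecs n. f (True # y))"
  unfolding vecs_Suc by (subst sum.union_disjoint) (auto simp: finite_vecs sum.reindex)

lemma sum_vecs_map_Not: "(\<Sum>y\<in>vecs n. f (map Not y)) = (\<Sum>y\<in>vecs n. f y)"
proof -
  have "bij_betw (map Not) (vecs n) (vecs n)"
    by (rule bij_betw_byWitness[where f'="map Not"]) (auto simp: vecs_def comp_def)
  then show ?thesis by (rule sum.reindex_bij_betw)
qed

lemma walsh_gext:
  assumes "a \<in> vecs n"
  shows "walsh (Suc n) (gext g b) (c # a) =
    (if even (of_bool b + of_bool c + wt a) then walsh n g a else 0)"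
proof -
  let ?S = "\<Sum>y\<in>vecs n. (-1::real) ^ of_bool (g y \<noteq> ip y a)"
  let ?s = "(-1::real) ^ of_bool (b \<noteq> (c \<noteq> odd (wt a)))"
  have low: "(\<Sum>y\<in>vecs n. (-1::real) ^ of_bool (gext g b (False # y) \<noteq> ip (False # y) (c # a)))
      = ?S"
    by (simp add: gext_def ip_Cons)
  have "(\<Sum>y\<in>vecs n. (-1::real) ^ of_bool (gext g b (True # y) \<noteq> ip (True # y) (c # a)))
      = (\<Sum>y\<in>vecs n. (-1::real) ^ of_bool ((b \<noteq> g (map Not y)) \<noteq> (c \<noteq> ip y a)))"
    by (simp add: gext_def ip_Cons)
  also have "\<dots> = (\<Sum>y\<in>vecs n.
      (-1::real) ^ of_bool ((b \<noteq> g (map Not (map Not y))) \<noteq> (c \<noteq> ip (map Not y) a)))"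
    by (rule sum_vecs_map_Not[symmetric])
  also have "\<dots> = (\<Sum>y\<in>vecs n. ?s * (-1::real) ^ of_bool (g y \<noteq> ip y a))"
  proof (rule sum.cong)
    fix y assume "y \<in> vecs n"
    then have "ip (map Not y) a = (ip y a \<noteq> odd (wt a))"
      using assms by (intro ip_map_Not) (simp add: vecs_def)
    then show "(-1::real) ^ of_bool ((b \<noteq> g (map Not (map Not y))) \<noteq> (c \<noteq> ip (map Not y) a))
        = ?s * (-1::real) ^ of_bool (g y \<noteq> ip y a)"
      by (simp add: comp_def) (cases b; cases c; cases "g y"; cases "ip y a"; cases "odd (wt a)"; simp)
  qed simp
  also have "\<dots> = ?s * ?S" by (simp add: sum_distrib_left)
  finally have high: "(\<Sum>y\<in>vecs n.
      (-1::real) ^ of_bool (gext g b (True # y) \<noteq> ip (True # y) (c # a))) = ?s * ?S" .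
  have "walsh (Suc n) (gext g b) (c # a) = (1 / 2 ^ Suc n) * (?S + ?s * ?S)"
    unfolding walsh_def sum_vecs_Suc low high ..
  moreover have "?s = (if even (of_bool b + of_bool c + wt a) then 1 else -1)"
    by (cases b; cases c) auto
  ultimately show ?thesis by (auto simp: walsh_def)
qed

lemma walsh_gext_cases:
  assumes "\<beta> \<in> vecs (Suc n)"
  obtains "walsh (Suc n) (gext g b) \<beta> = 0"
  | a where "a \<in> vecs n" "walsh (Suc n) (gext g b) \<beta> = walsh n g a"
  using assms by (elim vecs_SucE) (metis walsh_gext)

lemma resilient_gext:
  assumes "t mod 2 = of_bool b" and "resilient n t g"
  shows "resilient (Suc n) (Suc t) (gext g b)"
  unfolding resilient_def
proof (intro ballI impI)
  fix \<beta> assume \<beta>: "\<beta> \<in> vecs (Suc n)" "wt \<beta> \<le> Suc t"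
  then obtain c a where ca: "\<beta> = c # a" "a \<in> vecs n" by (elim vecs_SucE)
  show "walsh (Suc n) (gext g b) \<beta> = 0"
  proof (cases "wt a \<le> t")
    case True
    then show ?thesis using assms(2) ca by (simp add: walsh_gext resilient_def)
  next
    case False
    then have "\<not> c" "wt a = Suc t" using \<beta>(2) ca by (auto simp: wt_Cons)
    then have "odd (of_bool b + of_bool c + wt a)" using assms(1) by (cases b) (simp_all, presburger+)
    then show ?thesis using ca by (simp add: walsh_gext)
  qed
qed

lemma not_resilient_gext:
  assumes "t mod 2 = of_bool b" and "resilient n t g" and "\<not> resilient n (Suc t) g"
  shows "\<not> resilient (Suc n) (Suc (Suc t)) (gext g b)"
proof -
  obtain a where a: "a \<in> vecs n" "wt a \<le> Suc t" "walsh n g a \<noteq> 0"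
    using assms(3) by (auto simp: resilient_def)
  then have "wt a = Suc t" using assms(2) by (force simp: resilient_def)
  then have "even (of_bool b + of_bool True + wt a)" using assms(1) by (cases b) (simp_all, presburger+)
  then have "walsh (Suc n) (gext g b) (True # a) \<noteq> 0" using a by (simp add: walsh_gext)
  moreover have "True # a \<in> vecs (Suc n)" "wt (True # a) \<le> Suc (Suc t)"
    using a(1) \<open>wt a = Suc t\<close> by (auto simp: vecs_def wt_Cons)
  ultimately show ?thesis by (auto simp: resilient_def)
qed

lemma plateaued_gext: "plateaued n g \<Longrightarrow> plateaued (Suc n) (gext g b)"
  unfolding plateaued_def by (metis insertI1 walsh_gext_cases)

lemma finite_walsh_squares: "finite {(walsh n f a)\<^sup>2 | a. a \<in> vecs n}"
  using finite_vecs by (simp add: setcompr_eq_image)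

lemma walsh_square_le_Max: "a \<in> vecs n \<Longrightarrow> (walsh n f a)\<^sup>2 \<le> Max {(walsh n f a)\<^sup>2 | a. a \<in> vecs n}"
  by (intro Max_ge finite_walsh_squares) blast

lemma plateaued_walsh_square_eq_Max:
  assumes "plateaued n f" and "a \<in> vecs n" and "walsh n f a \<noteq> 0"
  shows "(walsh n f a)\<^sup>2 = Max {(walsh n f a)\<^sup>2 | a. a \<in> vecs n}"
proof -
  obtain c where c: "\<And>a. a \<in> vecs n \<Longrightarrow> walsh n f a \<in> {0, c, -c}"
    using assms(1) unfolding plateaued_def by blast
  then have sq: "\<And>a'. a' \<in> vecs n \<Longrightarrow> (walsh n f a')\<^sup>2 \<le> (walsh n f a)\<^sup>2"
    using c[OF assms(2)] assms(3) by fastforce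
  show ?thesis
    using assms(2) sq by (intro Max_eqI[symmetric] finite_walsh_squares) auto
qed

text \<open>The nonvanishing hypothesis always holds by Parseval's identity.\<close>

lemma Max_walsh_square_eq_powr_H_inf:
  assumes "a \<in> vecs n" and "walsh n f a \<noteq> 0"
  shows "Max {(walsh n f a)\<^sup>2 | a. a \<in> vecs n} = 2 powr (- H_inf n f)"
proof -
  define M where "M = Max {(walsh n f a)\<^sup>2 | a. a \<in> vecs n}"
  have "M \<ge> (walsh n f a)\<^sup>2" unfolding M_def using assms(1) by (rule walsh_square_le_Max)
  then have M_pos: "M > 0" using assms(2) by (smt (verit) zero_less_power2)
  have "M \<in> {(walsh n f a)\<^sup>2 | a. a \<in> vecs n}"
    unfolding M_def using assms(1) by (intro Max_in finite_walsh_squares) blast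
  then obtain m where m: "m \<in> vecs n" "(walsh n f m)\<^sup>2 = M" by blast
  have "H_inf n f = log 2 (1 / M)"
    unfolding H_inf_def
  proof (rule Min_eqI)
    show "finite {log 2 (1 / (walsh n f a)\<^sup>2) | a. a \<in> vecs n \<and> (walsh n f a)\<^sup>2 \<noteq> 0}"
      using finite_vecs by simp
    show "log 2 (1 / M) \<in> {log 2 (1 / (walsh n f a)\<^sup>2) | a. a \<in> vecs n \<and> (walsh n f a)\<^sup>2 \<noteq> 0}"
      using m M_pos by force
  next
    fix y assume "y \<in> {log 2 (1 / (walsh n f a)\<^sup>2) | a. a \<in> vecs n \<and> (walsh n f a)\<^sup>2 \<noteq> 0}"
    then obtain a' where a': "y = log 2 (1 / (walsh n f a')\<^sup>2)" "a' \<in> vecs n" "(walsh n f a')\<^sup>2 \<noteq> 0"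
      by blast
    have "(walsh n f a')\<^sup>2 \<le> M" unfolding M_def using a'(2) by (rule walsh_square_le_Max)
    then show "log 2 (1 / M) \<le> y"
      using a'(1,3) M_pos by (simp add: log_divide log_le_cancel_iff)
  qed
  then show ?thesis using M_pos by (simp add: M_def powr_minus)
qed

theorem mainTheorem7:
  fixes g :: "bool list \<Rightarrow> bool" and b :: bool and n t :: nat
  assumes "t < n"
    and "t mod 2 = of_bool b"
    and "resilient n t g" and "\<not> resilient n (t + 1) g"
  shows "resilient (n + 1) (t + 1) (gext g b) \<and> \<not> resilient (n + 1) (t + 2) (gext g b)
    \<and> (plateaued n g \<longrightarrow>
          plateaued (n + 1) (gext g b)
        \<and> (\<forall>\<beta>\<in>vecs (n + 1). (walsh (n + 1) (gext g b) \<beta>)\<^sup>2 \<noteq> 0 \<longrightarrow>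
              (walsh (n + 1) (gext g b) \<beta>)\<^sup>2 = Max {(walsh n g a)\<^sup>2 | a. a \<in> vecs n})
        \<and> Max {(walsh n g a)\<^sup>2 | a. a \<in> vecs n} = 2 powr (- H_inf n g))"
proof -
  obtain a0 where a0: "a0 \<in> vecs n" "walsh n g a0 \<noteq> 0"
    using assms(4) by (auto simp: resilient_def)
  have "(walsh (Suc n) (gext g b) \<beta>)\<^sup>2 = Max {(walsh n g a)\<^sup>2 | a. a \<in> vecs n}"
    if "plateaued n g" "\<beta> \<in> vecs (Suc n)" "(walsh (Suc n) (gext g b) \<beta>)\<^sup>2 \<noteq> 0" for \<beta>
    using that(2) by (rule walsh_gext_cases)
      (use that in \<open>auto intro: plateaued_walsh_square_eq_Max\<close>)
  then show ?thesis
    using resilient_gext[OF assms(2,3)] not_resilient_gext[OF assms(2,3)] assms(4)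
      plateaued_gext Max_walsh_square_eq_powr_H_inf[OF a0]
    by simp
qed

end
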